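(* Let $\Gamma\subset\mathrm{SL}_2(\mathbb{R})$ be a Fuchsian group and $k$ an integer. Let $\mathfrak{o}_k=\mathcal{O}\partial_\tau\oplus\mathcal{O}$ be the space of first-order differential operators $f(\tau)\partial_\tau+g(\tau)$ with $f,g$ holomorphic on the upper half-plane $\mathbb{H}$, equipped with the weight-$k$ action $\|_k$ of $\Gamma$. Then the vector subspace $$\mathfrak{d}_k:=\{\,2p(\tau)\partial_\tau+k\,p'(\tau)\;:\;p\in\mathbb{C}[\tau],\ \deg p\le 2\,\}$$ of $\mathfrak{o}_k$ is a $\Gamma$-submodule, i.e. $a\|_k\gamma\in\mathfrak{d}_k$ for all $a\in\mathfrak{d}_k$ and $\gamma\in\Gamma$.
   Context: $\Gamma$ acts on $\mathbb{H}$ by $\gamma\tau=\frac{a\tau+b}{c\tau+d}$ for $\gamma=\begin{psmatrix}a&b\\c&d\end{psmatrix}$, and $j_\gamma(\tau)=c\tau+d$. $\mathcal{O}$ denotes the holomorphic functions on $\mathbb{H}$ and $\mathcal{O}[\partial_\tau]$ the finite-order linear differential operators with coefficients in $\mathcal{O}$. The weight-$k$ action on $\mathcal{O}[\partial_\tau]$ is $(a\|_k\gamma)(\tau,\partial_\tau)=j_\gamma(\tau)^{-k}\,a(\gamma\tau,\partial_{\gamma\tau})\,j_\gamma(\tau)^{k}$, where $j_\gamma^{\pm k}$ act as multiplication operators and $\partial_{\gamma\tau}=(c\tau+d)^2\partial_\tau$. *)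

theory Defs
  imports "HOL-Analysis.Analysis" "HOL-Computational_Algebra.Polynomial"
begin

definition SL2R :: "(real^2^2) set" where
  "SL2R = {A. det A = 1}"

definition fuchsian :: "(real^2^2) set \<Rightarrow> bool" where
  "fuchsian G \<longleftrightarrow> G \<subseteq> SL2R \<and> mat 1 \<in> G
     \<and> (\<forall>A\<in>G. \<forall>B\<in>G. A ** B \<in> G) \<and> (\<forall>A\<in>G. matrix_inv A \<in> G)
     \<and> (\<forall>A\<in>G. \<exists>e>0. \<forall>B\<in>G. dist B A < e \<longrightarrow> B = A)"

definition upper_half_plane :: "complex set" where
  "upper_half_plane = {z. Im z > 0}"

definition jfac :: "real^2^2 \<Rightarrow> complex \<Rightarrow> complex" where
  "jfac A \<tau> = of_real (A$2$1) * \<tau> + of_real (A$2$2)"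

definition moeb :: "real^2^2 \<Rightarrow> complex \<Rightarrow> complex" where
  "moeb A \<tau> = (of_real (A$1$1) * \<tau> + of_real (A$1$2)) / jfac A \<tau>"

text \<open>A first-order differential operator f(tau) d/dtau + g(tau) is represented by the pair (f, g).\<close>

type_synonym dop = "(complex \<Rightarrow> complex) \<times> (complex \<Rightarrow> complex)"

definition apply_dop :: "dop \<Rightarrow> (complex \<Rightarrow> complex) \<Rightarrow> complex \<Rightarrow> complex" where
  "apply_dop a h \<tau> = fst a \<tau> * deriv h \<tau> + snd a \<tau> * h \<tau>"

text \<open>The weight-k action as an operator:
  (a||_k gamma) h = j^{-k} * a(gamma tau, d_{gamma tau}) (j^k h), with d_{gamma tau} = j^2 d_tau.\<close>

definition slash_apply :: "int \<Rightarrow> real^2^2 \<Rightarrow> dop \<Rightarrow> (complex \<Rightarrow> complex) \<Rightarrow> complex \<Rightarrow> complex" where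
  "slash_apply k A a h \<tau> =
     (jfac A \<tau>) powi (-k) *
       (fst a (moeb A \<tau>) * (jfac A \<tau>)^2 * deriv (\<lambda>t. (jfac A t) powi k * h t) \<tau>
        + snd a (moeb A \<tau>) * ((jfac A \<tau>) powi k * h \<tau>))"

definition dk :: "int \<Rightarrow> dop set" where
  "dk k = {((\<lambda>\<tau>. 2 * poly p \<tau>), (\<lambda>\<tau>. of_int k * poly (pderiv p) \<tau>)) | p :: complex poly. degree p \<le> 2}"

end

theory Submission
  imports Defs
begin

text \<open>
  For a polynomial p of degree at most 2 put (p|\<gamma>)(\<tau>) = j(\<tau>)^2 p(\<gamma>\<tau>), where
  j(\<tau>) = c\<tau> + d. This is again a polynomial of degree at most 2, and since
  d(\<gamma>\<tau>)/d\<tau> = j(\<tau>)^-2 its derivative is 2 c j(\<tau>) p(\<gamma>\<tau>) + p'(\<gamma>\<tau>). Expanding the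
  weight-k action of 2p\<partial> + kp' with the product rule produces exactly these two
  expressions as the new coefficients, so (2p\<partial> + kp')|k\<gamma> = 2(p|\<gamma>)\<partial> + k(p|\<gamma>)'.
\<close>

definition dk_op :: "int \<Rightarrow> complex poly \<Rightarrow> dop" where
  "dk_op k p = ((\<lambda>\<tau>. 2 * poly p \<tau>), (\<lambda>\<tau>. of_int k * poly (pderiv p) \<tau>))"

lemma dk_eq: "dk k = {dk_op k p | p. degree p \<le> 2}"
  unfolding dk_def dk_op_def ..

definition quadratic_slash :: "'a \<Rightarrow> 'a \<Rightarrow> 'a \<Rightarrow> 'a \<Rightarrow> 'a::comm_ring_1 poly \<Rightarrow> 'a poly" where
  "quadratic_slash a b c d p =
     smult (coeff p 0) ([:d, c:]\<^sup>2) + smult (coeff p 1) ([:b, a:] * [:d, c:])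
       + smult (coeff p 2) ([:b, a:]\<^sup>2)"

lemma degree_quadratic_slash: "degree (quadratic_slash a b c d p) \<le> 2"
  unfolding quadratic_slash_def
  by (intro degree_add_le degree_smult_le[THEN order_trans];
      simp add: power2_eq_square degree_mult_le[THEN order_trans])

lemma degree_le_2_eq:
  assumes "degree p \<le> 2"
  shows "p = [:coeff p 0, coeff p 1, coeff p 2:]"
proof (rule poly_eqI)
  fix n
  show "coeff p n = coeff [:coeff p 0, coeff p 1, coeff p 2:] n"
  proof (cases "n \<le> 2")
    case True
    then consider "n = 0" | "n = 1" | "n = 2" by linarith
    then show ?thesis by cases (simp_all add: numeral_2_eq_2)
  next
    case False
    with assms show ?thesis by (simp add: coeff_eq_0 coeff_pCons split: nat.split)
  qed
qed

lemma poly_degree_le_2: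
  fixes p :: "'a::comm_ring_1 poly"
  assumes "degree p \<le> 2"
  shows "poly p x = coeff p 0 + coeff p 1 * x + coeff p 2 * x\<^sup>2"
proof -
  have "poly p x = poly [:coeff p 0, coeff p 1, coeff p 2:] x"
    using degree_le_2_eq[OF assms] by (rule arg_cong[where f = "\<lambda>q. poly q x"])
  also have "\<dots> = coeff p 0 + coeff p 1 * x + coeff p 2 * x\<^sup>2"
    by (simp add: algebra_simps power2_eq_square)
  finally show ?thesis .
qed

lemma poly_pderiv_degree_le_2:
  fixes p :: "'a::idom poly"
  assumes "degree p \<le> 2"
  shows "poly (pderiv p) x = coeff p 1 + 2 * coeff p 2 * x"
proof -
  have "poly (pderiv p) x = poly (pderiv [:coeff p 0, coeff p 1, coeff p 2:]) x"
    using degree_le_2_eq[OF assms] by (rule arg_cong[where f = "\<lambda>q. poly (pderiv q) x"])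
  also have "\<dots> = coeff p 1 + 2 * coeff p 2 * x"
    by (simp add: pderiv_pCons)
  finally show ?thesis .
qed

lemma poly_quadratic_slash:
  fixes a b c d t :: "'a::field"
  assumes "degree p \<le> 2" and "c * t + d \<noteq> 0"
  shows "poly (quadratic_slash a b c d p) t = (c * t + d)\<^sup>2 * poly p ((a * t + b) / (c * t + d))"
proof -
  define J L where "J = c * t + d" and "L = a * t + b"
  have "poly (quadratic_slash a b c d p) t = coeff p 0 * J\<^sup>2 + coeff p 1 * L * J + coeff p 2 * L\<^sup>2"
    unfolding quadratic_slash_def J_def L_def by (simp add: algebra_simps)
  also have "\<dots> = J\<^sup>2 * (coeff p 0 + coeff p 1 * (L / J) + coeff p 2 * (L / J)\<^sup>2)"
    using assms(2) unfolding J_def[symmetric] by (simp add: field_simps power2_eq_square)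
  finally show ?thesis
    unfolding poly_degree_le_2[OF assms(1)] J_def L_def .
qed

lemma poly_pderiv_quadratic_slash:
  fixes a b c d t :: "'a::field"
  assumes "degree p \<le> 2" and "a * d - b * c = 1" and "c * t + d \<noteq> 0"
  shows "poly (pderiv (quadratic_slash a b c d p)) t =
           2 * c * (c * t + d) * poly p ((a * t + b) / (c * t + d))
           + poly (pderiv p) ((a * t + b) / (c * t + d))"
proof -
  define J L where "J = c * t + d" and "L = a * t + b"
  have "c * L + 1 = a * J"
    using assms(2) unfolding J_def L_def by (simp add: algebra_simps)
  then have unimodular: "(c * L + 1) / J = a"
    using assms(3) unfolding J_def[symmetric] by simp
  have "2 * c * J * (coeff p 0 + coeff p 1 * (L / J) + coeff p 2 * (L / J)\<^sup>2)
          + (coeff p 1 + 2 * coeff p 2 * (L / J))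
        = 2 * coeff p 0 * c * J + coeff p 1 * (c * L + (c * L + 1) / J * J)
          + 2 * coeff p 2 * L * ((c * L + 1) / J)"
    using assms(3) unfolding J_def[symmetric] by (simp add: field_simps power2_eq_square)
  also have "\<dots> = 2 * coeff p 0 * c * J + coeff p 1 * (a * J + c * L) + 2 * coeff p 2 * a * L"
    unfolding unimodular by (simp add: algebra_simps)
  also have "\<dots> = poly (pderiv (quadratic_slash a b c d p)) t"
    unfolding quadratic_slash_def J_def L_def
    by (simp add: pderiv_add pderiv_smult pderiv_mult pderiv_power_Suc pderiv_pCons
        power2_eq_square algebra_simps)
  finally show ?thesis
    unfolding poly_degree_le_2[OF assms(1)] poly_pderiv_degree_le_2[OF assms(1)] J_def L_def ..
qed

lemma jfac_nonzero:
  assumes "det A = 1" and "Im \<tau> > 0"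
  shows "jfac A \<tau> \<noteq> 0"
proof
  assume zero: "jfac A \<tau> = 0"
  have "Im (jfac A \<tau>) = A$2$1 * Im \<tau>"
    unfolding jfac_def by simp
  with zero assms(2) have "A$2$1 = 0"
    by simp
  with zero have "A$2$2 = 0"
    unfolding jfac_def by simp
  with \<open>A$2$1 = 0\<close> assms(1) show False
    by (simp add: det_2)
qed

lemma has_field_derivative_jfac_powi:
  assumes "jfac A \<tau> \<noteq> 0"
  shows "((\<lambda>t. jfac A t powi k) has_field_derivative
           of_int k * jfac A \<tau> powi (k - 1) * of_real (A$2$1)) (at \<tau>)"
  using assms unfolding jfac_def by (auto intro!: derivative_eq_intros)

lemma slash_apply_dk_op:
  assumes "jfac A \<tau> \<noteq> 0" and "h field_differentiable at \<tau>"
  shows "slash_apply k A (dk_op k p) h \<tau> =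
           2 * (jfac A \<tau>)\<^sup>2 * poly p (moeb A \<tau>) * deriv h \<tau>
           + of_int k * (2 * of_real (A$2$1) * jfac A \<tau> * poly p (moeb A \<tau>)
                         + poly (pderiv p) (moeb A \<tau>)) * h \<tau>"
proof -
  define J where "J = jfac A \<tau>"
  define P where "P = J powi k"
  have "J \<noteq> 0" and "P \<noteq> 0"
    using assms(1) unfolding P_def J_def by simp_all
  have "J powi (k - 1) = P / J"
    using \<open>J \<noteq> 0\<close> unfolding P_def by (simp add: power_int_diff)
  then have deriv_eq: "deriv (\<lambda>t. jfac A t powi k * h t) \<tau>
                         = of_int k * (P / J) * of_real (A$2$1) * h \<tau> + deriv h \<tau> * P"
    using DERIV_mult[OF has_field_derivative_jfac_powi[OF assms(1)]
        field_differentiable_derivI[OF assms(2)], of k]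
    unfolding J_def P_def by (intro DERIV_imp_deriv) simp
  have inverse_P: "J powi (-k) = inverse P"
    unfolding P_def by (simp add: power_int_minus)
  show ?thesis
    unfolding slash_apply_def dk_op_def fst_conv snd_conv deriv_eq
    unfolding J_def[symmetric] P_def[symmetric] inverse_P
    using \<open>J \<noteq> 0\<close> \<open>P \<noteq> 0\<close> by (simp add: field_simps power2_eq_square)
qed

lemma slash_apply_dk_op_eq_apply_dop:
  assumes "det A = 1" and "degree p \<le> 2" and "Im \<tau> > 0" and "h field_differentiable at \<tau>"
  shows "slash_apply k A (dk_op k p) h \<tau> =
           apply_dop (dk_op k (quadratic_slash (of_real (A$1$1)) (of_real (A$1$2))
                                 (of_real (A$2$1)) (of_real (A$2$2)) p)) h \<tau>"
proof -
  have nonzero: "jfac A \<tau> \<noteq> 0"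
    using assms(1,3) by (rule jfac_nonzero)
  have unimodular: "of_real (A$1$1) * of_real (A$2$2) - of_real (A$1$2) * of_real (A$2$1) = (1::complex)"
    using assms(1) by (simp add: det_2 flip: of_real_mult of_real_diff)
  have "slash_apply k A (dk_op k p) h \<tau> =
          2 * (jfac A \<tau>)\<^sup>2 * poly p (moeb A \<tau>) * deriv h \<tau>
          + of_int k * (2 * of_real (A$2$1) * jfac A \<tau> * poly p (moeb A \<tau>)
                        + poly (pderiv p) (moeb A \<tau>)) * h \<tau>"
    using nonzero assms(4) by (rule slash_apply_dk_op)
  also have "\<dots> = apply_dop (dk_op k (quadratic_slash (of_real (A$1$1)) (of_real (A$1$2))
                                 (of_real (A$2$1)) (of_real (A$2$2)) p)) h \<tau>"
    using nonzero unfolding apply_dop_def dk_op_def moeb_def jfac_def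
    by (simp add: poly_quadratic_slash[OF assms(2)] poly_pderiv_quadratic_slash[OF assms(2) unimodular])
  finally show ?thesis .
qed

theorem lemma2p1:
  fixes G :: "(real^2^2) set" and k :: int
  assumes "fuchsian G"
  shows "\<forall>a\<in>dk k. \<forall>A\<in>G. \<exists>b\<in>dk k. \<forall>h. h holomorphic_on upper_half_plane \<longrightarrow>
           (\<forall>\<tau>\<in>upper_half_plane. slash_apply k A a h \<tau> = apply_dop b h \<tau>)"
proof (intro ballI)
  fix a A
  assume "a \<in> dk k" and "A \<in> G"
  then obtain p where p: "degree p \<le> 2" and a_eq: "a = dk_op k p"
    unfolding dk_eq by blast
  have "det A = 1"
    using assms \<open>A \<in> G\<close> unfolding fuchsian_def SL2R_def by blast
  let ?q = "quadratic_slash (of_real (A$1$1)) (of_real (A$1$2)) (of_real (A$2$1)) (of_real (A$2$2)) p"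
  have "dk_op k ?q \<in> dk k"
    unfolding dk_eq using degree_quadratic_slash by blast
  moreover have "slash_apply k A a h \<tau> = apply_dop (dk_op k ?q) h \<tau>"
    if "h holomorphic_on upper_half_plane" and "\<tau> \<in> upper_half_plane" for h \<tau>
    using that \<open>det A = 1\<close> p unfolding a_eq upper_half_plane_def
    by (intro slash_apply_dk_op_eq_apply_dop)
      (auto intro: holomorphic_on_imp_differentiable_at simp: open_halfspace_Im_gt)
  ultimately show "\<exists>b\<in>dk k. \<forall>h. h holomorphic_on upper_half_plane \<longrightarrow>
          (\<forall>\<tau>\<in>upper_half_plane. slash_apply k A a h \<tau> = apply_dop b h \<tau>)"
    by blast
qed

end
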